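(* For every $n\ge 4$, the number of magic quad squares of type C in the EvenQuads-$2^n$ deck is \[10 + 85(2^n-16) + 43(2^n-16)(2^n-32) + (2^n-16)(2^n-32)(2^n-64).\]
   Context: The EvenQuads-$2^n$ deck consists of $2^n$ cards identified with the integers $0,1,\dots,2^n-1$. Four cards $a,b,c,d$ form a quad if and only if $a\oplus b\oplus c\oplus d=0$, where $\oplus$ is bitwise XOR. A quad square is a $4\times4$ array of $16$ pairwise distinct cards; it is magic if each of its four rows, four columns and two diagonals forms a quad. It is of type C if its first row is $0,1,2,3$ (left to right) and its first column is $0,4,8,12$ (top to bottom). *)

theory Defs
  imports Main "HOL-Library.FuncSet"
begin

text \<open>Cards of the EvenQuads-2^n deck are the naturals 0..2^n-1.
  Four cards form a quad iff their bitwise XOR is 0.\<close>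
definition is_quad :: "nat \<Rightarrow> nat \<Rightarrow> nat \<Rightarrow> nat \<Rightarrow> bool" where
  "is_quad a b c d \<longleftrightarrow> xor (xor (xor a b) c) d = 0"

text \<open>A 4x4 array is a function on {0..<4} x {0..<4} (row, column),
  extensional outside this index set.\<close>
definition square_idx :: "(nat \<times> nat) set" where
  "square_idx = {0..<4} \<times> {0..<4}"

definition quad_squares :: "nat \<Rightarrow> (nat \<times> nat \<Rightarrow> nat) set" where
  "quad_squares n = {M \<in> square_idx \<rightarrow>\<^sub>E {0..<2^n}. inj_on M square_idx}"

definition is_magic :: "(nat \<times> nat \<Rightarrow> nat) \<Rightarrow> bool" where
  "is_magic M \<longleftrightarrow>
     (\<forall>i<4. is_quad (M (i,0)) (M (i,1)) (M (i,2)) (M (i,3))) \<and>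
     (\<forall>j<4. is_quad (M (0,j)) (M (1,j)) (M (2,j)) (M (3,j))) \<and>
     is_quad (M (0,0)) (M (1,1)) (M (2,2)) (M (3,3)) \<and>
     is_quad (M (0,3)) (M (1,2)) (M (2,1)) (M (3,0))"

definition is_typeC :: "(nat \<times> nat \<Rightarrow> nat) \<Rightarrow> bool" where
  "is_typeC M \<longleftrightarrow> (\<forall>j<4. M (0,j) = j) \<and> (\<forall>i<4. M (i,0) = 4 * i)"

end

theory Submission
  imports Defs
begin

(* The first row, the first column and the quad conditions determine a magic square of type C
   by the three cards a = M(1,1), b = M(1,2), d = M(2,2): each entry is c xor phi s for a fixed
   card c < 16 and a fixed s < 8, where phi (span3 a b d below) is the GF(2)-linear map sending
   the bits 1, 2, 4 to a, b, d.  By linearity the sixteen entries are distinct iff phi s avoids an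
   explicit set forbidden s of cards below 16 for s = 1, ..., 7.  For an admissible pair (a, b)
   the values excluded for d are forbidden 4 together with the translates of forbidden 5, 6, 7 by
   a, b and xor a b.  A translate of a set of cards below 16 stays inside one block of 16 cards, so
   the size of the excluded set only depends on which of 0, a, b, xor a b share a block (x div 16);
   summing over these block patterns gives the cubic polynomial. *)

section \<open>Bitwise XOR on natural numbers\<close>

lemma xor_less_power2:
  fixes x y :: nat
  assumes "x < 2^n" "y < 2^n"
  shows "xor x y < 2^n"
proof -
  have "take_bit n (xor x y) = xor x y"
    using assms by (simp add: take_bit_nat_eq_self)
  then show ?thesis
    by (metis take_bit_nat_less_exp)
qed

lemma xor_div_power2: "xor (x::nat) y div 2^k = xor (x div 2^k) (y div 2^k)"
  using drop_bit_xor[of k x y] by (simp add: drop_bit_eq_div)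

lemma xor_div_power2_eq_left: "(y::nat) < 2^k \<Longrightarrow> xor x y div 2^k = x div 2^k"
  by (simp add: xor_div_power2)

lemma xor_cancel_left [simp]: "xor (x::nat) (xor x y) = y"
  by (simp flip: xor.assoc)

lemma xor_eq_0_iff: "xor (x::nat) y = 0 \<longleftrightarrow> x = y"
  by (metis xor_cancel_left xor.right_neutral xor_self_eq)

lemma xor_eq_left_iff: "xor (x::nat) y = x \<longleftrightarrow> y = 0"
  by (metis xor_cancel_left xor.right_neutral)

lemma xor_eq_right_iff: "xor (x::nat) y = y \<longleftrightarrow> x = 0"
  by (metis xor_eq_left_iff xor.commute)

lemma inj_on_xor: "inj_on (xor (c::nat)) A"
  by (rule inj_onI) (metis xor_cancel_left)

lemma card_xor_image: "card (xor (c::nat) ` A) = card A"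
  by (rule card_image[OF inj_on_xor])

lemma mem_xor_image_iff: "x \<in> xor c ` A \<longleftrightarrow> xor c x \<in> (A::nat set)"
  by (metis image_eqI imageE xor_cancel_left)

lemma xor_image_xor_image: "xor c ` xor c' ` A = xor (xor c c') ` (A::nat set)"
  by (simp add: image_image xor.assoc)

lemma xor_image_subset_lessThan_power2:
  "(c::nat) < 2^k \<Longrightarrow> A \<subseteq> {..<2^k} \<Longrightarrow> xor c ` A \<subseteq> {..<2^k}"
  using xor_less_power2 by fastforce

lemma card_Un_xor_image:
  fixes c :: nat
  assumes "A \<subseteq> {..<2^k}" "B \<subseteq> {..<2^k}" "2^k \<le> c"
  shows "card (A \<union> xor c ` B) = card A + card B"
proof -
  have "x div 2^k = 0" if "x \<in> A" for x
    using that assms(1) by auto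
  moreover have "y div 2^k = c div 2^k" if "y \<in> xor c ` B" for y
    using that assms(2) xor_div_power2_eq_left by auto
  moreover have "c div 2^k \<noteq> 0"
    using assms(3) by (simp add: div_greater_zero_iff)
  ultimately have "A \<inter> xor c ` B = {}"
    by fastforce
  moreover have "finite A" "finite B"
    using assms(1,2) finite_subset by auto
  ultimately show ?thesis
    by (simp add: card_Un_disjoint card_xor_image)
qed

section \<open>Parametrisation of magic squares of type C\<close>

(* const_tab is the square for a = b = d = 0; lin_tab ! k records, as bits 1, 2, 4, which of
   a, b, d enter the entry k = 4 i + j in row i, column j. *)
definition lin_tab :: "nat list" where
  "lin_tab = [0,0,0,0, 0,1,2,3, 0,2,4,6, 0,3,6,5]"

definition const_tab :: "nat list" where
  "const_tab = [0,1,2,3, 4,0,0,4, 8,15,0,7, 12,14,2,0]"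

definition span3 :: "nat \<Rightarrow> nat \<Rightarrow> nat \<Rightarrow> nat list" where
  "span3 a b d = [0, a, b, xor a b, d, xor a d, xor b d, xor (xor a b) d]"

definition entry :: "nat \<Rightarrow> nat \<Rightarrow> nat \<Rightarrow> nat \<Rightarrow> nat" where
  "entry a b d k = xor (const_tab ! k) (span3 a b d ! (lin_tab ! k))"

definition typeC_square :: "nat \<Rightarrow> nat \<Rightarrow> nat \<Rightarrow> nat \<times> nat \<Rightarrow> nat" where
  "typeC_square a b d = restrict (\<lambda>(i, j). entry a b d (4 * i + j)) square_idx"

lemma less_8_cases: "(s::nat) < 8 \<longleftrightarrow> s \<in> {0, 1, 2, 3, 4, 5, 6, 7}"
  by auto

lemma less_4_cases: "(i::nat) < 4 \<longleftrightarrow> i \<in> {0, 1, 2, 3}"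
  by auto

lemma all_less_4: "(\<forall>i::nat<4. P i) \<longleftrightarrow> P 0 \<and> P 1 \<and> P 2 \<and> P 3"
  unfolding less_4_cases by auto

lemma all_less_8:
  "(\<forall>s::nat<8. P s) \<longleftrightarrow> P 0 \<and> P 1 \<and> P 2 \<and> P 3 \<and> P 4 \<and> P 5 \<and> P 6 \<and> P 7"
  unfolding less_8_cases by blast

lemma span3_xor:
  assumes "s < 8" "t < 8"
  shows "span3 a b d ! xor s t = xor (span3 a b d ! s) (span3 a b d ! t)"
  using assms unfolding less_8_cases
  by (auto simp: span3_def xor.assoc xor.left_commute xor.commute)

lemma lin_tab_less: "k < 16 \<Longrightarrow> lin_tab ! k < 8"
  using nth_mem[of k lin_tab] by (auto simp: lin_tab_def)

lemma const_tab_less: "k < 16 \<Longrightarrow> const_tab ! k < 16"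
  using nth_mem[of k const_tab] by (auto simp: const_tab_def)

lemma entry_eq_iff:
  assumes "i < 16" "j < 16"
  shows "entry a b d i = entry a b d j \<longleftrightarrow>
    span3 a b d ! xor (lin_tab ! i) (lin_tab ! j) = xor (const_tab ! i) (const_tab ! j)"
proof -
  have "xor (entry a b d i) (entry a b d j) =
      xor (xor (const_tab ! i) (const_tab ! j)) (span3 a b d ! xor (lin_tab ! i) (lin_tab ! j))"
    using span3_xor[OF lin_tab_less[OF assms(1)] lin_tab_less[OF assms(2)]]
    by (simp add: entry_def xor.assoc xor.left_commute xor.commute)
  then show ?thesis
    by (metis xor_eq_0_iff)
qed

definition forbidden :: "nat \<Rightarrow> nat set" where
  "forbidden s = set [xor (const_tab ! i) (const_tab ! j).
     i \<leftarrow> [0..<16], j \<leftarrow> [0..<16], i \<noteq> j \<and> xor (lin_tab ! i) (lin_tab ! j) = s]"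

lemma mem_forbidden_iff:
  "c \<in> forbidden s \<longleftrightarrow> (\<exists>i<16. \<exists>j<16. i \<noteq> j \<and>
     xor (lin_tab ! i) (lin_tab ! j) = s \<and> c = xor (const_tab ! i) (const_tab ! j))"
  unfolding forbidden_def by (auto simp: set_concat) force+

lemma inj_on_entry_iff_span3:
  "inj_on (entry a b d) {..<16} \<longleftrightarrow> (\<forall>s<8. span3 a b d ! s \<notin> forbidden s)"
proof
  assume inj: "inj_on (entry a b d) {..<16}"
  show "\<forall>s<8. span3 a b d ! s \<notin> forbidden s"
  proof (intro allI impI notI)
    fix s assume "span3 a b d ! s \<in> forbidden s"
    then obtain i j where "i < 16" "j < 16" "i \<noteq> j"
      and "span3 a b d ! xor (lin_tab ! i) (lin_tab ! j) = xor (const_tab ! i) (const_tab ! j)"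
      unfolding mem_forbidden_iff by metis
    then show False
      using inj entry_eq_iff by (metis inj_onD lessThan_iff)
  qed
next
  assume avoid: "\<forall>s<8. span3 a b d ! s \<notin> forbidden s"
  show "inj_on (entry a b d) {..<16}"
  proof (rule inj_onI, rule ccontr)
    fix i j assume ij: "i \<in> {..<16}" "j \<in> {..<16}" "entry a b d i = entry a b d j" "i \<noteq> j"
    let ?s = "xor (lin_tab ! i) (lin_tab ! j)"
    have "?s < 8"
      using ij lin_tab_less xor_less_power2[of _ 3] by simp
    moreover have "span3 a b d ! ?s \<in> forbidden ?s"
      unfolding mem_forbidden_iff using ij entry_eq_iff by auto
    ultimately show False
      using avoid by blast
  qed
qed

lemma zero_notin_forbidden_0: "0 \<notin> forbidden 0"
  by (simp add: forbidden_def upt_rec const_tab_def lin_tab_def)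

lemma forbidden_eqs:
  "forbidden 1 = {0, 1, 2, 3, 4, 8, 11, 12, 14}"
  "forbidden 2 = {0, 1, 2, 3, 4, 7, 8, 11, 12, 13, 14, 15}"
  "forbidden 3 = {0, 2, 4, 5, 6, 7, 8, 10, 12, 13, 14, 15}"
  "forbidden 4 = {0, 1, 2, 3, 4, 7, 8, 12, 13}"
  "forbidden 5 = {0, 1, 2, 3, 4, 6, 8, 9, 12}"
  "forbidden 6 = {0, 1, 2, 3, 4, 5, 6, 7, 10, 11, 14, 15}"
  "forbidden 7 = {0, 2, 4, 7, 14, 15}"
  by (simp_all add: forbidden_def upt_rec const_tab_def lin_tab_def insert_commute
      numeral_3_eq_3[symmetric])

lemma forbidden_subset: "forbidden s \<subseteq> {..<16}"
  using const_tab_less xor_less_power2[of _ 4] by (auto simp: mem_forbidden_iff)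

definition admissible_pair :: "nat \<Rightarrow> nat \<Rightarrow> bool" where
  "admissible_pair a b \<longleftrightarrow> a \<notin> forbidden 1 \<and> b \<notin> forbidden 2 \<and> xor a b \<notin> forbidden 3"

definition excluded :: "nat \<Rightarrow> nat \<Rightarrow> nat set" where
  "excluded a b = forbidden 4 \<union> xor a ` forbidden 5 \<union> xor b ` forbidden 6
     \<union> xor (xor a b) ` forbidden 7"

lemma inj_on_entry_iff:
  "inj_on (entry a b d) {..<16} \<longleftrightarrow> admissible_pair a b \<and> d \<notin> excluded a b"
proof -
  have "span3 a b d ! 0 \<notin> forbidden 0"
    using zero_notin_forbidden_0 by (simp add: span3_def)
  moreover have "d \<notin> excluded a b \<longleftrightarrow> d \<notin> forbidden 4 \<and> xor a d \<notin> forbidden 5 \<and>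
      xor b d \<notin> forbidden 6 \<and> xor (xor a b) d \<notin> forbidden 7"
    unfolding excluded_def Un_iff mem_xor_image_iff by blast
  ultimately show ?thesis
    unfolding inj_on_entry_iff_span3 all_less_8 admissible_pair_def
    by (simp add: span3_def)
qed

lemma bij_betw_square_idx: "bij_betw (\<lambda>(i, j). 4 * i + j) square_idx {..<16::nat}"
  by (rule bij_betw_byWitness[where f' = "\<lambda>k. (k div 4, k mod 4)"]) (auto simp: square_idx_def)

lemma inj_on_typeC_square_iff:
  "inj_on (typeC_square a b d) square_idx \<longleftrightarrow> admissible_pair a b \<and> d \<notin> excluded a b"
proof -
  have "inj_on (typeC_square a b d) square_idx \<longleftrightarrow>
      inj_on (entry a b d \<circ> (\<lambda>(i, j). 4 * i + j)) square_idx"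
    by (rule inj_on_cong) (auto simp: typeC_square_def)
  also have "\<dots> \<longleftrightarrow> inj_on (entry a b d) {..<16}"
    using bij_betw_square_idx comp_inj_on_iff unfolding bij_betw_def by metis
  finally show ?thesis
    unfolding inj_on_entry_iff .
qed

lemma typeC_square_params:
  "typeC_square a b d (1, 1) = a" "typeC_square a b d (1, 2) = b" "typeC_square a b d (2, 2) = d"
  by (simp_all add: typeC_square_def square_idx_def entry_def const_tab_def lin_tab_def span3_def)

lemma xor_numerals_assoc:
  "xor (numeral k) (xor (numeral l) x) = xor (xor (numeral k) (numeral l)) (x::nat)"
  "xor 1 (xor (numeral l) x) = xor (xor 1 (numeral l)) (x::nat)"
  "xor (Suc 0) (xor (numeral l) x) = xor (xor 1 (numeral l)) (x::nat)"
  by (simp_all flip: xor.assoc)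

lemma typeC_square_magic: "is_magic (typeC_square a b d) \<and> is_typeC (typeC_square a b d)"
  unfolding is_magic_def is_typeC_def is_quad_def typeC_square_def all_less_4
  by (simp add: square_idx_def entry_def const_tab_def lin_tab_def span3_def
      xor.assoc xor.left_commute xor.commute xor_numerals_assoc)

lemma is_quad_last: "is_quad p q r s \<Longrightarrow> s = xor (xor p q) (r::nat)"
  unfolding is_quad_def by (simp add: xor_eq_0_iff)

lemma is_quad_third: "is_quad p q r s \<Longrightarrow> r = xor (xor p q) (s::nat)"
  unfolding is_quad_def by (metis xor_cancel_left xor_eq_0_iff)

lemma magic_typeC_entry:
  assumes "is_magic M" "is_typeC M" "i < 4" "j < 4"
  shows "M (i, j) = entry (M (1, 1)) (M (1, 2)) (M (2, 2)) (4 * i + j)"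
proof -
  define a b d where "a = M (1, 1)" and "b = M (1, 2)" and "d = M (2, 2)"
  have border: "M (0, 0) = 0" "M (0, 1) = 1" "M (0, 2) = 2" "M (0, 3) = 3"
    "M (1, 0) = 4" "M (2, 0) = 8" "M (3, 0) = 12"
    using assms(2) unfolding is_typeC_def all_less_4 by auto
  have row: "is_quad (M (i, 0)) (M (i, 1)) (M (i, 2)) (M (i, 3))" if "i < 4" for i
    using assms(1) that unfolding is_magic_def by blast
  have col: "is_quad (M (0, j)) (M (1, j)) (M (2, j)) (M (3, j))" if "j < 4" for j
    using assms(1) that unfolding is_magic_def by blast
  have "is_quad (M (0, 3)) (M (1, 2)) (M (2, 1)) (M (3, 0))"
    using assms(1) unfolding is_magic_def by blast
  then have "M (2, 1) = xor (xor (M (0, 3)) (M (1, 2))) (M (3, 0))"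
    by (rule is_quad_third)
  then have m21: "M (2, 1) = xor 15 b"
    unfolding border b_def by (simp add: xor.left_commute xor.commute xor_numerals_assoc)
  have "M (1, 3) = xor (xor 4 a) b"
    using is_quad_last[OF row[of 1]] border unfolding a_def b_def by simp
  moreover have "M (2, 3) = xor (xor 8 (xor 15 b)) d"
    using is_quad_last[OF row[of 2]] border m21 unfolding d_def by simp
  moreover have "M (3, 1) = xor (xor 1 a) (xor 15 b)"
    using is_quad_last[OF col[of 1]] border m21 unfolding a_def by simp
  moreover have "M (3, 2) = xor (xor 2 b) d"
    using is_quad_last[OF col[of 2]] border unfolding b_def d_def by simp
  moreover have "M (3, 3) = xor (xor 12 (M (3, 1))) (M (3, 2))"
    using is_quad_last[OF row[of 3]] border by simp
  ultimately have "\<forall>i<4. \<forall>j<4. M (i, j) = entry a b d (4 * i + j)"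
    using border m21 unfolding all_less_4 a_def b_def d_def
    by (simp add: entry_def const_tab_def lin_tab_def span3_def
        xor.left_commute xor.commute xor_numerals_assoc)
  then show ?thesis
    using assms(3,4) unfolding a_def b_def d_def by blast
qed

lemma magic_typeC_eq_typeC_square:
  assumes "M \<in> extensional square_idx" "is_magic M" "is_typeC M"
  shows "M = typeC_square (M (1, 1)) (M (1, 2)) (M (2, 2))"
proof (rule extensionalityI[OF assms(1)])
  show "typeC_square (M (1, 1)) (M (1, 2)) (M (2, 2)) \<in> extensional square_idx"
    by (simp add: typeC_square_def)
  fix p assume "p \<in> square_idx"
  then obtain i j where ij: "p = (i, j)" "i < 4" "j < 4"
    by (auto simp: square_idx_def)
  moreover have "M (i, j) = entry (M (1, 1)) (M (1, 2)) (M (2, 2)) (4 * i + j)"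
    using magic_typeC_entry[OF assms(2,3) ij(2,3)] .
  ultimately show "M p = typeC_square (M (1, 1)) (M (1, 2)) (M (2, 2)) p"
    by (simp add: typeC_square_def square_idx_def)
qed

lemma sixteen_le_power2: "4 \<le> n \<Longrightarrow> (16::nat) \<le> 2^n"
  using power_increasing[of 4 n "2::nat"] by simp

lemma entry_less_power2:
  assumes "4 \<le> n" "a < 2^n" "b < 2^n" "d < 2^n" "k < 16"
  shows "entry a b d k < 2^n"
proof -
  have "const_tab ! k < 2^n"
    using const_tab_less[OF assms(5)] sixteen_le_power2[OF assms(1)] by linarith
  moreover have "span3 a b d ! s < 2^n" if "s < 8" for s
    using that assms(2-4) unfolding less_8_cases by (auto simp: span3_def intro!: xor_less_power2)
  ultimately show ?thesis
    using lin_tab_less[OF assms(5)] by (simp add: entry_def xor_less_power2)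
qed

definition admissible_triples :: "nat \<Rightarrow> (nat \<times> nat \<times> nat) set" where
  "admissible_triples N =
     {(a, b, d). a < N \<and> b < N \<and> d < N \<and> admissible_pair a b \<and> d \<notin> excluded a b}"

lemma typeC_square_in_quad_squares:
  assumes "4 \<le> n" "(a, b, d) \<in> admissible_triples (2^n)"
  shows "typeC_square a b d \<in> quad_squares n"
proof -
  have "typeC_square a b d \<in> square_idx \<rightarrow>\<^sub>E {0..<2^n}"
    using assms entry_less_power2[OF assms(1)]
    by (auto simp: typeC_square_def square_idx_def admissible_triples_def)
  then show ?thesis
    using assms(2) inj_on_typeC_square_iff by (simp add: quad_squares_def admissible_triples_def)
qed

lemma magic_typeC_squares_eq_image:
  assumes "4 \<le> n"
  shows "{M \<in> quad_squares n. is_magic M \<and> is_typeC M} =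
    (\<lambda>(a, b, d). typeC_square a b d) ` admissible_triples (2^n)"
proof
  show "(\<lambda>(a, b, d). typeC_square a b d) ` admissible_triples (2^n)
      \<subseteq> {M \<in> quad_squares n. is_magic M \<and> is_typeC M}"
    using typeC_square_in_quad_squares[OF assms] typeC_square_magic by auto
  show "{M \<in> quad_squares n. is_magic M \<and> is_typeC M}
      \<subseteq> (\<lambda>(a, b, d). typeC_square a b d) ` admissible_triples (2^n)"
  proof
    fix M assume "M \<in> {M \<in> quad_squares n. is_magic M \<and> is_typeC M}"
    then have M: "M \<in> quad_squares n" "is_magic M" "is_typeC M"
      by simp_all
    then have M_eq: "M = typeC_square (M (1, 1)) (M (1, 2)) (M (2, 2))"
      by (intro magic_typeC_eq_typeC_square) (auto simp: quad_squares_def PiE_def)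
    have "(1, 1) \<in> square_idx" "(1, 2) \<in> square_idx" "(2, 2) \<in> square_idx"
      by (auto simp: square_idx_def)
    then have "M (1, 1) < 2^n" "M (1, 2) < 2^n" "M (2, 2) < 2^n"
      using M(1) by (auto simp: quad_squares_def)
    moreover have "inj_on (typeC_square (M (1, 1)) (M (1, 2)) (M (2, 2))) square_idx"
      using M(1) by (simp only: M_eq[symmetric]) (simp add: quad_squares_def)
    ultimately have "(M (1, 1), M (1, 2), M (2, 2)) \<in> admissible_triples (2^n)"
      unfolding inj_on_typeC_square_iff by (simp add: admissible_triples_def)
    then show "M \<in> (\<lambda>(a, b, d). typeC_square a b d) ` admissible_triples (2^n)"
      using M_eq by force
  qed
qed

lemma inj_typeC_square: "inj (\<lambda>(a, b, d). typeC_square a b d)"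
proof (rule injI)
  fix x y :: "nat \<times> nat \<times> nat"
  obtain a b d a' b' d' where xy: "x = (a, b, d)" "y = (a', b', d')"
    by (metis prod_cases3)
  assume "(\<lambda>(a, b, d). typeC_square a b d) x = (\<lambda>(a, b, d). typeC_square a b d) y"
  then have "typeC_square a b d = typeC_square a' b' d'"
    by (simp add: xy)
  then show "x = y"
    using typeC_square_params[of a b d] typeC_square_params[of a' b' d'] by (simp add: xy)
qed

lemma card_magic_typeC_squares:
  "4 \<le> n \<Longrightarrow> card {M \<in> quad_squares n. is_magic M \<and> is_typeC M} = card (admissible_triples (2^n))"
  unfolding magic_typeC_squares_eq_image using inj_typeC_square
  by (simp add: card_image inj_on_subset)

section \<open>Counting completions block by block\<close>

lemma card_admissible_triples:
  "card (admissible_triples N) =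
    (\<Sum>a<N. \<Sum>b<N. card {d. d < N \<and> admissible_pair a b \<and> d \<notin> excluded a b})"
proof -
  have "admissible_triples N =
      (SIGMA a:{..<N}. SIGMA b:{..<N}. {d. d < N \<and> admissible_pair a b \<and> d \<notin> excluded a b})"
    by (auto simp: admissible_triples_def)
  then show ?thesis
    by (simp add: card_SigmaI)
qed

definition completions :: "nat \<Rightarrow> nat \<Rightarrow> nat \<Rightarrow> int" where
  "completions N a b = (if admissible_pair a b then int N - int (card (excluded a b)) else 0)"

lemma excluded_subset:
  assumes "4 \<le> n" "a < 2^n" "b < 2^n"
  shows "excluded a b \<subseteq> {..<2^n}"
proof -
  have "forbidden s \<subseteq> {..<2^n}" for s
    using forbidden_subset sixteen_le_power2[OF assms(1)] by fastforce
  moreover have "xor a b < 2^n"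
    using assms(2,3) by (rule xor_less_power2)
  ultimately show ?thesis
    unfolding excluded_def using assms(2,3) xor_image_subset_lessThan_power2 by (metis Un_least)
qed

lemma card_completions:
  assumes "4 \<le> n" "a < 2^n" "b < 2^n"
  shows "int (card {d. d < 2^n \<and> admissible_pair a b \<and> d \<notin> excluded a b}) = completions (2^n) a b"
proof (cases "admissible_pair a b")
  case True
  have "{d. d < 2^n \<and> admissible_pair a b \<and> d \<notin> excluded a b} = {..<2^n} - excluded a b"
    using True by auto
  moreover have sub: "excluded a b \<subseteq> {..<2^n}"
    using assms by (rule excluded_subset)
  moreover have "card (excluded a b) \<le> 2^n"
    using card_mono[OF _ sub] by simp
  moreover have "finite (excluded a b)"
    using sub finite_subset by blast
  ultimately show ?thesis
    using True by (simp add: completions_def card_Diff_subset of_nat_diff)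
qed (simp add: completions_def)

lemma high_notin_forbidden: "16 \<le> x \<Longrightarrow> x \<notin> forbidden s"
  using forbidden_subset by fastforce

lemma xor_div_16: "xor (x::nat) y div 16 = xor (x div 16) (y div 16)"
  using xor_div_power2[of x y 4] by simp

lemma sixteen_le_iff_div_16_neq_0: "16 \<le> (x::nat) \<longleftrightarrow> x div 16 \<noteq> 0"
  by auto

lemma xor_div_16_eq_left: "(y::nat) < 16 \<Longrightarrow> xor x y div 16 = x div 16"
  by (simp add: xor_div_16)

lemma mem_xor_image_forbidden_div_16: "y \<in> xor c ` forbidden s \<Longrightarrow> y div 16 = c div 16"
  using forbidden_subset xor_div_16_eq_left by blast

(* The number of completions of a pair (a, b) in which exactly one of a, b, xor a b (the one with
   index s in span3) is a card w < 16 while the other two share a block above 16: the excluded set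
   then splits into a part below 16 and a translate of a second such part into that block. *)
definition split_count :: "nat \<Rightarrow> nat \<Rightarrow> nat \<Rightarrow> nat \<Rightarrow> nat \<Rightarrow> nat \<Rightarrow> int" where
  "split_count N s p q r w = (if w \<notin> forbidden s
     then int N - int (card (forbidden 4 \<union> xor w ` forbidden p))
       - int (card (forbidden q \<union> xor w ` forbidden r))
     else 0)"

lemma completions_eq_split_count:
  assumes "w < 16" "16 \<le> c" "admissible_pair a b \<longleftrightarrow> w \<notin> forbidden s"
    and "excluded a b =
      (forbidden 4 \<union> xor w ` forbidden p) \<union> xor c ` (forbidden q \<union> xor w ` forbidden r)"
  shows "completions N a b = split_count N s p q r w"
proof -
  have "forbidden t \<subseteq> {..<2^4}" for t
    using forbidden_subset by simp
  moreover have "xor w ` forbidden t \<subseteq> {..<2^4}" for t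
    using xor_image_subset_lessThan_power2[of w 4] forbidden_subset assms(1) by simp
  ultimately have "card (excluded a b) =
      card (forbidden 4 \<union> xor w ` forbidden p) + card (forbidden q \<union> xor w ` forbidden r)"
    unfolding assms(4) using assms(2) by (intro card_Un_xor_image[of _ 4]) (simp_all add: Un_least)
  then show ?thesis
    using assms(3) by (simp add: completions_def split_count_def)
qed

lemma completions_small_large:
  assumes "a < 16" "16 \<le> b"
  shows "completions N a b = split_count N 1 5 6 7 a"
proof (rule completions_eq_split_count[OF assms])
  have "xor b a div 16 = b div 16"
    using assms(1) by (rule xor_div_16_eq_left)
  then have "16 \<le> xor a b"
    using assms(2) unfolding sixteen_le_iff_div_16_neq_0 by (simp add: xor.commute)
  then show "admissible_pair a b \<longleftrightarrow> a \<notin> forbidden 1"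
    using assms(2) by (simp add: admissible_pair_def high_notin_forbidden)
  have "xor (xor a b) ` forbidden 7 = xor b ` xor a ` forbidden 7"
    by (simp only: xor_image_xor_image xor.commute)
  then show "excluded a b =
      (forbidden 4 \<union> xor a ` forbidden 5) \<union> xor b ` (forbidden 6 \<union> xor a ` forbidden 7)"
    unfolding excluded_def image_Un by blast
qed

lemma completions_large_small:
  assumes "16 \<le> a" "b < 16"
  shows "completions N a b = split_count N 2 6 5 7 b"
proof (rule completions_eq_split_count[OF assms(2,1)])
  have "xor a b div 16 = a div 16"
    using assms(2) by (rule xor_div_16_eq_left)
  then have "16 \<le> xor a b"
    using assms(1) unfolding sixteen_le_iff_div_16_neq_0 by simp
  then show "admissible_pair a b \<longleftrightarrow> b \<notin> forbidden 2"
    using assms(1) by (simp add: admissible_pair_def high_notin_forbidden)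
  have "xor (xor a b) ` forbidden 7 = xor a ` xor b ` forbidden 7"
    by (simp only: xor_image_xor_image)
  then show "excluded a b =
      (forbidden 4 \<union> xor b ` forbidden 6) \<union> xor a ` (forbidden 5 \<union> xor b ` forbidden 7)"
    unfolding excluded_def image_Un by blast
qed

lemma completions_same_block:
  assumes "16 \<le> a" "w < 16"
  shows "completions N a (xor a w) = split_count N 3 7 5 6 w"
proof (rule completions_eq_split_count[OF assms(2,1)])
  have "xor a w div 16 = a div 16"
    using assms(2) by (rule xor_div_16_eq_left)
  then have "16 \<le> xor a w"
    using assms(1) unfolding sixteen_le_iff_div_16_neq_0 by simp
  then show "admissible_pair a (xor a w) \<longleftrightarrow> w \<notin> forbidden 3"
    using assms(1) by (simp add: admissible_pair_def high_notin_forbidden)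
  have "xor (xor a w) ` forbidden 6 = xor a ` xor w ` forbidden 6"
    by (simp only: xor_image_xor_image)
  then show "excluded a (xor a w) =
      (forbidden 4 \<union> xor w ` forbidden 7) \<union> xor a ` (forbidden 5 \<union> xor w ` forbidden 6)"
    unfolding excluded_def image_Un xor_cancel_left by blast
qed

lemma finite_forbidden: "finite (forbidden s)"
  by (simp add: forbidden_def)

lemma card_forbidden: "card (forbidden 4) = 9" "card (forbidden 5) = 9" "card (forbidden 6) = 12"
  "card (forbidden 7) = 6"
  by (simp_all add: forbidden_eqs)

lemma completions_distinct_blocks:
  assumes "16 \<le> a" "16 \<le> b" "a div 16 \<noteq> b div 16"
  shows "completions N a b = int N - 36"
proof -
  have blocks: "a div 16 \<noteq> 0" "b div 16 \<noteq> 0"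
    "xor a b div 16 \<noteq> 0" "xor a b div 16 \<noteq> a div 16" "xor a b div 16 \<noteq> b div 16"
    using assms unfolding sixteen_le_iff_div_16_neq_0
    by (simp_all add: xor_div_16 xor_eq_0_iff xor_eq_left_iff xor_eq_right_iff)
  have separated: "X \<inter> Y = {}" if "\<forall>x\<in>X. x div 16 \<in> P" "\<forall>y\<in>Y. y div 16 \<notin> P"
    for X Y :: "nat set" and P
    using that by blast
  have low: "\<forall>y\<in>forbidden 4. y div 16 = 0"
    using forbidden_subset by fastforce
  have high: "\<forall>y\<in>xor c ` forbidden s. y div 16 = c div 16" for c s
    using mem_xor_image_forbidden_div_16 by blast
  have "forbidden 4 \<inter> xor a ` forbidden 5 = {}"
    by (rule separated[where P = "{0}"]) (use low high blocks in auto)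
  moreover have "(forbidden 4 \<union> xor a ` forbidden 5) \<inter> xor b ` forbidden 6 = {}"
    by (rule separated[where P = "{0, a div 16}"]) (use low high blocks assms(3) in auto)
  moreover have "(forbidden 4 \<union> xor a ` forbidden 5 \<union> xor b ` forbidden 6)
      \<inter> xor (xor a b) ` forbidden 7 = {}"
    by (rule separated[where P = "{0, a div 16, b div 16}"]) (use low high blocks in auto)
  ultimately have "card (excluded a b) = 36"
    unfolding excluded_def
    by (simp add: card_Un_disjoint finite_forbidden card_xor_image card_forbidden)
  then show ?thesis
    using assms(1,2) blocks(3) unfolding sixteen_le_iff_div_16_neq_0
    by (simp add: completions_def admissible_pair_def high_notin_forbidden)
qed

lemma sum_lessThan_conv_sum_list: "(\<Sum>a<n. f a) = sum_list (map f [0..<n])"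
  by (simp only: atLeast0LessThan[symmetric] atLeastLessThan_upt sum_set_upt_conv_sum_list_nat)

lemma upt_0_16: "[0..<16] = [0,1,2,3,4,5,6,7,8,9,10,11,12,13,14,15::nat]"
  by (simp add: upt_rec)

(* forbidden_eqs is unfolded before simp, which would otherwise rewrite forbidden 1 to
   forbidden (Suc 0) and leave it unevaluated. *)
lemma sum_completions_small_small: "(\<Sum>a<16. \<Sum>b<16. completions N a b) = 7 * int N - 102"
  unfolding sum_lessThan_conv_sum_list upt_0_16 completions_def admissible_pair_def excluded_def
    forbidden_eqs
  by (simp add: numeral_3_eq_3[symmetric] card_insert_if cong: if_weak_cong)

lemma sum_split_count_1: "(\<Sum>w<16. split_count N 1 5 6 7 w) = 7 * int N - 192"
  unfolding sum_lessThan_conv_sum_list upt_0_16 split_count_def forbidden_eqs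
  by (simp add: numeral_3_eq_3[symmetric] card_insert_if cong: if_weak_cong)

lemma sum_split_count_2: "(\<Sum>w<16. split_count N 2 6 5 7 w) = 4 * int N - 105"
  unfolding sum_lessThan_conv_sum_list upt_0_16 split_count_def forbidden_eqs
  by (simp add: numeral_3_eq_3[symmetric] card_insert_if cong: if_weak_cong)

lemma sum_split_count_3: "(\<Sum>w<16. split_count N 3 7 5 6 w) = 4 * int N - 105"
  unfolding sum_lessThan_conv_sum_list upt_0_16 split_count_def forbidden_eqs
  by (simp add: numeral_3_eq_3[symmetric] card_insert_if cong: if_weak_cong)

lemma lessThan_power2_split: "4 \<le> n \<Longrightarrow> {..<2^n} = {..<16} \<union> {16..<2^n::nat}"
  using sixteen_le_power2 by (auto intro: less_le_trans)

lemma sum_completions_small: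
  assumes "4 \<le> n" "a < 16"
  shows "(\<Sum>b<2^n. completions (2^n) a b) =
    (\<Sum>b<16. completions (2^n) a b) + (int (2^n) - 16) * split_count (2^n) 1 5 6 7 a"
proof -
  have "(\<Sum>b<2^n. completions (2^n) a b) =
      (\<Sum>b<16. completions (2^n) a b) + (\<Sum>b\<in>{16..<2^n}. completions (2^n) a b)"
    unfolding lessThan_power2_split[OF assms(1)] by (rule sum.union_disjoint) auto
  also have "(\<Sum>b\<in>{16..<2^n}. completions (2^n) a b) =
      (\<Sum>b\<in>{16..<2^n::nat}. split_count (2^n) 1 5 6 7 a)"
    using completions_small_large[OF assms(2)] by (intro sum.cong) auto
  finally show ?thesis
    using sixteen_le_power2[OF assms(1)] by (simp add: of_nat_diff)
qed

lemma mem_xor_image_lessThan_16_iff: "b \<in> xor a ` {..<16} \<longleftrightarrow> b div 16 = (a::nat) div 16"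
proof -
  have "xor a b < 16 \<longleftrightarrow> xor a b div 16 = 0"
    by auto
  then show ?thesis
    unfolding mem_xor_image_iff lessThan_iff xor_div_16 xor_eq_0_iff by auto
qed

lemma xor_image_lessThan_16_subset:
  fixes a :: nat
  assumes "4 \<le> n" "16 \<le> a" "a < 2^n"
  shows "xor a ` {..<16} \<subseteq> {16..<2^n}"
proof
  fix b assume b: "b \<in> xor a ` {..<16}"
  have "w < 2^n" if "w < 16" for w :: nat
    using that sixteen_le_power2[OF assms(1)] by linarith
  then have "b < 2^n"
    using b assms(3) xor_less_power2 by auto
  moreover have "16 \<le> b"
    using b assms(2) unfolding mem_xor_image_lessThan_16_iff sixteen_le_iff_div_16_neq_0 by simp
  ultimately show "b \<in> {16..<2^n}"
    by simp
qed

lemma sum_completions_large: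
  assumes "4 \<le> n" "16 \<le> a" "a < 2^n"
  shows "(\<Sum>b<2^n. completions (2^n) a b) = (\<Sum>b<16. split_count (2^n) 2 6 5 7 b)
    + (\<Sum>w<16. split_count (2^n) 3 7 5 6 w) + (int (2^n) - 32) * (int (2^n) - 36)"
proof -
  define same where "same = xor a ` {..<16}"
  define other where "other = {16..<2^n} - same"
  have same_subset: "same \<subseteq> {16..<2^n}"
    unfolding same_def using assms by (rule xor_image_lessThan_16_subset)
  then have split: "{..<2^n} = {..<16} \<union> (same \<union> other)"
    unfolding other_def lessThan_power2_split[OF assms(1)] by blast
  have "card same = 16"
    by (simp add: same_def card_xor_image)
  moreover have "card same \<le> card {16..<2^n::nat}"
    using same_subset by (intro card_mono) auto
  ultimately have card_other: "int (card other) = int (2^n) - 32"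
    using same_subset by (simp add: other_def card_Diff_subset finite_subset of_nat_diff)
  have "(\<Sum>b<2^n. completions (2^n) a b) = (\<Sum>b<16. completions (2^n) a b)
      + (\<Sum>b\<in>same \<union> other. completions (2^n) a b)"
    unfolding split using same_subset by (intro sum.union_disjoint) (auto simp: other_def same_def)
  also have "(\<Sum>b\<in>same \<union> other. completions (2^n) a b) =
      (\<Sum>b\<in>same. completions (2^n) a b) + (\<Sum>b\<in>other. completions (2^n) a b)"
    by (intro sum.union_disjoint) (auto simp: other_def same_def)
  also have "(\<Sum>b<16. completions (2^n) a b) = (\<Sum>b<16. split_count (2^n) 2 6 5 7 b)"
    using completions_large_small[OF assms(2)] by simp
  also have "(\<Sum>b\<in>same. completions (2^n) a b) = (\<Sum>w<16. completions (2^n) a (xor a w))"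
    unfolding same_def by (rule sum.reindex[OF inj_on_xor, unfolded comp_def])
  also have "\<dots> = (\<Sum>w<16. split_count (2^n) 3 7 5 6 w)"
    using completions_same_block[OF assms(2)] by simp
  also have "(\<Sum>b\<in>other. completions (2^n) a b) = (\<Sum>b\<in>other. int (2^n) - 36)"
    using completions_distinct_blocks[OF assms(2)]
    by (intro sum.cong) (auto simp: other_def same_def mem_xor_image_lessThan_16_iff)
  finally show ?thesis
    using card_other by simp
qed

lemma sum_completions:
  assumes "4 \<le> n"
  defines "N \<equiv> int (2^n)"
  shows "(\<Sum>a<2^n. \<Sum>b<2^n. completions (2^n) a b) = 7 * N - 102 + (N - 16) * (7 * N - 192)
    + (N - 16) * (8 * N - 210 + (N - 32) * (N - 36))"
proof -
  have "(\<Sum>a<2^n. \<Sum>b<2^n. completions (2^n) a b) = (\<Sum>a<16. \<Sum>b<2^n. completions (2^n) a b)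
      + (\<Sum>a\<in>{16..<2^n}. \<Sum>b<2^n. completions (2^n) a b)"
    unfolding lessThan_power2_split[OF assms(1)] by (rule sum.union_disjoint) auto
  also have "(\<Sum>a<16. \<Sum>b<2^n. completions (2^n) a b)
      = (\<Sum>a<16. (\<Sum>b<16. completions (2^n) a b) + (N - 16) * split_count (2^n) 1 5 6 7 a)"
    using sum_completions_small[OF assms(1)] by (simp add: N_def)
  also have "\<dots> = (\<Sum>a<16. \<Sum>b<16. completions (2^n) a b)
      + (N - 16) * (\<Sum>a<16. split_count (2^n) 1 5 6 7 a)"
    by (simp only: sum.distrib sum_distrib_left)
  also have "\<dots> = 7 * N - 102 + (N - 16) * (7 * N - 192)"
    unfolding sum_completions_small_small sum_split_count_1 N_def ..
  also have "(\<Sum>a\<in>{16..<2^n}. \<Sum>b<2^n. completions (2^n) a b)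
      = (\<Sum>a\<in>{16..<2^n::nat}. 8 * N - 210 + (N - 32) * (N - 36))"
    using sum_completions_large[OF assms(1)]
    by (intro sum.cong) (auto simp: sum_split_count_2 sum_split_count_3 N_def)
  also have "\<dots> = (N - 16) * (8 * N - 210 + (N - 32) * (N - 36))"
    using sixteen_le_power2[OF assms(1)] by (simp add: N_def of_nat_diff)
  finally show ?thesis .
qed

theorem mainTheorem8:
  fixes n :: nat
  assumes "n \<ge> 4"
  shows "int (card {M \<in> quad_squares n. is_magic M \<and> is_typeC M}) =
    10 + 85 * (2^n - 16) + 43 * (2^n - 16) * (2^n - 32)
       + (2^n - 16) * (2^n - 32) * (2^n - 64)"
proof -
  have "int (card {M \<in> quad_squares n. is_magic M \<and> is_typeC M}) =
      (\<Sum>a<2^n. \<Sum>b<2^n. completions (2^n) a b)"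
    unfolding card_magic_typeC_squares[OF assms] card_admissible_triples of_nat_sum
    using card_completions[OF assms] by (intro sum.cong) auto
  also have "\<dots> = 10 + 85 * (2^n - 16) + 43 * (2^n - 16) * (2^n - 32)
       + (2^n - 16) * (2^n - 32) * (2^n - 64)"
    unfolding sum_completions[OF assms] by (simp add: algebra_simps)
  finally show ?thesis .
qed

end
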